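(* Let $n\geq 2$ and let $P$ be a set of $n$ points equally spaced on a circle. There is a tree spanner on $P$ with dilation at most $\frac{2n}{\pi}+\frac{\pi}{2n}$.
   Context: A tree spanner on $P$ is a spanning tree on vertex set $P$ whose edges are weighted by the Euclidean distance between their endpoints. Its dilation is $\max\{ d_G(p,p')/|pp'| : p\neq p'\in P\}$, where $d_G$ is the shortest-path distance in the tree and $|pp'|$ the Euclidean distance. *)

theory Defs
  imports "HOL-Analysis.Analysis"
begin

text \<open>Points of the plane are complex numbers; the Euclidean distance is dist.
  A graph on vertex set P is given by a set E of undirected edges, each a
  two-element subset of P.\<close>

definition is_graph_on :: "complex set \<Rightarrow> complex set set \<Rightarrow> bool" where
  "is_graph_on P E \<longleftrightarrow> (\<forall>e\<in>E. \<exists>u v. u \<in> P \<and> v \<in> P \<and> u \<noteq> v \<and> e = {u, v})"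

definition is_walk :: "complex set set \<Rightarrow> complex list \<Rightarrow> bool" where
  "is_walk E xs \<longleftrightarrow> xs \<noteq> [] \<and> (\<forall>i. Suc i < length xs \<longrightarrow> {xs ! i, xs ! Suc i} \<in> E)"

definition walk_length :: "complex list \<Rightarrow> real" where
  "walk_length xs = (\<Sum>i<length xs - 1. dist (xs ! i) (xs ! Suc i))"

definition connected_graph :: "complex set \<Rightarrow> complex set set \<Rightarrow> bool" where
  "connected_graph P E \<longleftrightarrow>
     (\<forall>p\<in>P. \<forall>q\<in>P. \<exists>xs. is_walk E xs \<and> hd xs = p \<and> last xs = q)"

definition is_cycle :: "complex set set \<Rightarrow> complex list \<Rightarrow> bool" where
  "is_cycle E xs \<longleftrightarrow> length xs \<ge> 3 \<and> distinct xs \<and> is_walk E xs \<and> {last xs, hd xs} \<in> E"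

definition spanning_tree :: "complex set \<Rightarrow> complex set set \<Rightarrow> bool" where
  "spanning_tree P E \<longleftrightarrow> is_graph_on P E \<and> connected_graph P E \<and> (\<nexists>xs. is_cycle E xs)"

definition graph_dist :: "complex set set \<Rightarrow> complex \<Rightarrow> complex \<Rightarrow> real" where
  "graph_dist E p q = Inf {walk_length xs | xs. is_walk E xs \<and> hd xs = p \<and> last xs = q}"

definition dilation :: "complex set \<Rightarrow> complex set set \<Rightarrow> real" where
  "dilation P E = Max {graph_dist E p q / dist p q | p q. p \<in> P \<and> q \<in> P \<and> p \<noteq> q}"

definition equally_spaced :: "nat \<Rightarrow> complex \<Rightarrow> real \<Rightarrow> real \<Rightarrow> complex set" where
  "equally_spaced n c r \<theta> = {c + of_real r * cis (\<theta> + 2 * pi * real k / real n) | k. k < n}"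

end

theory Submission
  imports Defs
begin

text \<open>Take the star centred at one of the points. Two points are joined in it by a path through
  the centre of the star, of length at most 4r, while two distinct points are at distance at least
  2r sin(\<pi>/n). So the dilation is at most 2 / sin(\<pi>/n) = 1 / (sin x cos x) with x = \<pi>/(2n), and
  1 / (sin x cos x) = tan x + 1 / tan x \<le> x + 1/x, because x \<le> tan x \<le> 1 and t + 1/t
  decreases on (0, 1].\<close>

lemma two_div_sin_double_le:
  fixes x :: real
  assumes "0 < x" "x \<le> pi/4"
  shows "2 / sin (2 * x) \<le> 1/x + x"
proof -
  have "x < pi/2" using assms pi_gt_zero by linarith
  then have "cos x > 0" "sin x > 0" using assms by (auto intro: cos_gt_zero sin_gt_zero)
  define t where "t = tan x"
  have "x \<le> t"
    using abs_tan_ge[of x] \<open>x < pi/2\<close> \<open>0 < x\<close> \<open>cos x > 0\<close> \<open>sin x > 0\<close>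
    by (simp add: t_def tan_def)
  have "t \<le> 1"
    using tan_mono_le[of x "pi/4"] assms \<open>x < pi/2\<close> by (simp add: t_def tan_45)
  have "2 / sin (2 * x) = 1 / (sin x * cos x)"
    by (simp add: sin_double)
  also have "\<dots> = t + 1/t"
    using \<open>cos x > 0\<close> \<open>sin x > 0\<close> sin_cos_squared_add[of x]
    by (simp add: t_def tan_def field_simps power2_eq_square)
  also have "\<dots> \<le> x + 1/x"
  proof -
    have "(t - x) * (1 - x * t) \<ge> 0"
      using \<open>x \<le> t\<close> \<open>t \<le> 1\<close> assms by (intro mult_nonneg_nonneg) (auto intro!: mult_le_one)
    then have "(t - x) * (1 - x * t) / (x * t) \<ge> 0"
      using assms \<open>x \<le> t\<close> by simp
    moreover have "(x + 1/x) - (t + 1/t) = (t - x) * (1 - x * t) / (x * t)"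
      using assms \<open>x \<le> t\<close> by (simp add: field_simps)
    ultimately show ?thesis by linarith
  qed
  finally show ?thesis by simp
qed

lemma cos_le_cos_between:
  fixes d y :: real
  assumes "0 \<le> d" "d \<le> y" "y \<le> 2*pi - d"
  shows "cos y \<le> cos d"
proof (cases "y \<le> pi")
  case True
  then show ?thesis using assms by (intro cos_monotone_0_pi_le) auto
next
  case False
  then have "cos (2*pi - y) \<le> cos d" using assms by (intro cos_monotone_0_pi_le) auto
  then show ?thesis by simp
qed

lemma norm_cis_diff_ge:
  fixes a b d :: real
  assumes "0 \<le> d" "d \<le> a - b" "a - b \<le> 2*pi - d"
  shows "2 * sin (d/2) \<le> cmod (cis a - cis b)"
proof (rule power2_le_imp_le)
  have "(cmod (cis a - cis b))\<^sup>2 = (cos a - cos b)\<^sup>2 + (sin a - sin b)\<^sup>2"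
    by (simp add: cmod_power2)
  also have "\<dots> = 2 - 2 * cos (a - b)"
    by (simp add: power2_diff algebra_simps cos_diff)
  also have "\<dots> \<ge> 2 - 2 * cos d"
    using cos_le_cos_between[OF assms] by simp
  also have "2 - 2 * cos d = (2 * sin (d/2))\<^sup>2"
    using cos_double_sin[of "d/2"] by (simp add: power_mult_distrib)
  finally show "(2 * sin (d/2))\<^sup>2 \<le> (cmod (cis a - cis b))\<^sup>2" .
qed simp

lemma dist_circle_points_ge:
  fixes i j n :: nat and r :: real
  assumes "i < n" "j < n" "i \<noteq> j" "0 \<le> r"
  shows "2 * r * sin (pi / n) \<le>
    dist (c + r * cis (\<theta> + 2*pi*i/n)) (c + r * cis (\<theta> + 2*pi*j/n))"
proof -
  have ordered: "2 * r * sin (pi / n) \<le>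
      dist (c + r * cis (\<theta> + 2*pi*i/n)) (c + r * cis (\<theta> + 2*pi*j/n))"
    if "j < i" "i < n" for i j :: nat
  proof -
    have "1 \<le> real (i - j)" "real (i - j) \<le> real n - 1"
      using that by linarith+
    then have "2*pi / n \<le> 2*pi * (i - j) / n" "2*pi * (i - j) / n \<le> 2*pi * (n - 1) / n"
      by (intro divide_right_mono mult_left_mono; simp)+
    moreover have "2*pi * (n - 1) / n = 2*pi - 2*pi / n"
      using that by (simp add: field_simps)
    ultimately have "2*pi / n \<le> 2*pi * (i - j) / n" "2*pi * (i - j) / n \<le> 2*pi - 2*pi / n"
      by simp_all
    then have "2 * sin (pi / n) \<le> cmod (cis (\<theta> + 2*pi*i/n) - cis (\<theta> + 2*pi*j/n))"
      using norm_cis_diff_ge[of "2*pi/n" "\<theta> + 2*pi*i/n" "\<theta> + 2*pi*j/n"] that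
      by (simp add: diff_divide_distrib of_nat_diff algebra_simps)
    then show ?thesis
      using \<open>0 \<le> r\<close> mult_left_mono
      by (fastforce simp: dist_norm norm_mult simp flip: right_diff_distrib)
  qed
  show ?thesis
    using assms ordered[of j i] ordered[of i j] by (cases "j < i") (auto simp: dist_commute)
qed

lemma equally_spaced_dist_ge:
  assumes "p \<in> equally_spaced n c r \<theta>" "q \<in> equally_spaced n c r \<theta>" "p \<noteq> q" "0 \<le> r"
  shows "2 * r * sin (pi / n) \<le> dist p q"
  using assms dist_circle_points_ge[of _ n _ r c \<theta>] unfolding equally_spaced_def by blast

lemma dist_equally_spaced_center:
  assumes "p \<in> equally_spaced n c r \<theta>" "0 \<le> r"
  shows "dist p c = r"
  using assms by (auto simp: equally_spaced_def dist_norm norm_mult)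

lemma finite_equally_spaced: "finite (equally_spaced n c r \<theta>)"
  unfolding equally_spaced_def by simp

lemma equally_spaced_two_points:
  assumes "n \<ge> 2" "r > 0"
  obtains p q where "p \<in> equally_spaced n c r \<theta>" "q \<in> equally_spaced n c r \<theta>" "p \<noteq> q"
proof
  let ?pt = "\<lambda>k::nat. c + r * cis (\<theta> + 2*pi*k/n)"
  have mem: "?pt k \<in> equally_spaced n c r \<theta>" if "k < n" for k
    using that unfolding equally_spaced_def by blast
  show "?pt 0 \<in> equally_spaced n c r \<theta>" "?pt 1 \<in> equally_spaced n c r \<theta>"
    by (rule mem, use assms in simp)+
  have "sin (pi / n) > 0"
    using assms by (intro sin_gt_zero) (auto simp: field_simps)
  then have "0 < 2 * r * sin (pi / n)"
    using assms by simp
  also have "\<dots> \<le> dist (?pt 0) (?pt 1)"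
    by (rule dist_circle_points_ge) (use assms in auto)
  finally show "?pt 0 \<noteq> ?pt 1"
    by auto
qed

lemma is_walk_singleton [simp]: "is_walk E [a]"
  by (simp add: is_walk_def)

lemma is_walk_Cons_Cons [simp]: "is_walk E (a # b # xs) \<longleftrightarrow> {a, b} \<in> E \<and> is_walk E (b # xs)"
  by (auto simp: is_walk_def less_Suc_eq_0_disj)

lemma walk_length_singleton [simp]: "walk_length [a] = 0"
  by (simp add: walk_length_def)

lemma walk_length_Cons_Cons [simp]: "walk_length (a # b # xs) = dist a b + walk_length (b # xs)"
  by (simp add: walk_length_def sum.lessThan_Suc_shift del: sum.lessThan_Suc)

lemma graph_dist_le_walk_length:
  assumes "is_walk E xs" "hd xs = p" "last xs = q"
  shows "graph_dist E p q \<le> walk_length xs"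
  unfolding graph_dist_def
proof (rule cInf_lower)
  show "walk_length xs \<in> {walk_length xs |xs. is_walk E xs \<and> hd xs = p \<and> last xs = q}"
    using assms by blast
  show "bdd_below {walk_length xs |xs. is_walk E xs \<and> hd xs = p \<and> last xs = q}"
    unfolding bdd_below_def walk_length_def by (auto intro!: exI[of _ 0] sum_nonneg)
qed

definition star_graph :: "complex \<Rightarrow> complex set \<Rightarrow> complex set set" where
  "star_graph p0 P = {{p0, q} | q. q \<in> P \<and> q \<noteq> p0}"

lemma doubleton_in_star_graph_iff:
  assumes "p0 \<in> P"
  shows "{a, b} \<in> star_graph p0 P \<longleftrightarrow> a \<noteq> b \<and> a \<in> P \<and> b \<in> P \<and> (a = p0 \<or> b = p0)"
  using assms by (auto simp: star_graph_def doubleton_eq_iff)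

lemma star_graph_walk:
  assumes "p0 \<in> P" "p \<in> P" "q \<in> P"
  obtains xs where "is_walk (star_graph p0 P) xs" "hd xs = p" "last xs = q"
    "walk_length xs \<le> dist p p0 + dist p0 q"
proof -
  consider "p = q" | "p \<noteq> q" "p = p0 \<or> q = p0" | "p \<noteq> p0" "q \<noteq> p0"
    by blast
  then show ?thesis
  proof cases
    case 1
    then show ?thesis using that[of "[p]"] by simp
  next
    case 2
    then show ?thesis using that[of "[p, q]"] assms by (auto simp: doubleton_in_star_graph_iff)
  next
    case 3
    then show ?thesis using that[of "[p, p0, q]"] assms by (simp add: doubleton_in_star_graph_iff)
  qed
qed

lemma star_graph_no_cycle:
  assumes "p0 \<in> P"
  shows "\<not> is_cycle (star_graph p0 P) xs"
proof
  assume "is_cycle (star_graph p0 P) xs"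
  then obtain x0 x1 x2 ys where xs: "xs = x0 # x1 # x2 # ys" and "distinct xs"
    and edges: "{x0, x1} \<in> star_graph p0 P" "{x1, x2} \<in> star_graph p0 P"
      "{last xs, x0} \<in> star_graph p0 P"
    unfolding is_cycle_def by (auto simp: numeral_3_eq_3 Suc_le_length_iff)
  then have "x1 = p0"
    using assms by (auto simp: doubleton_in_star_graph_iff)
  moreover have "last xs \<in> set (x2 # ys)"
    by (simp add: xs)
  ultimately show False
    using edges(3) \<open>distinct xs\<close> assms by (auto simp: xs doubleton_in_star_graph_iff)
qed

lemma spanning_tree_star_graph:
  assumes "p0 \<in> P"
  shows "spanning_tree P (star_graph p0 P)"
proof -
  have "is_graph_on P (star_graph p0 P)"
    using assms unfolding is_graph_on_def star_graph_def by blast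
  moreover have "connected_graph P (star_graph p0 P)"
    unfolding connected_graph_def using star_graph_walk[OF assms] by metis
  ultimately show ?thesis
    using star_graph_no_cycle[OF assms] by (simp add: spanning_tree_def)
qed

lemma graph_dist_star_graph_le:
  assumes "p0 \<in> P" "p \<in> P" "q \<in> P"
  shows "graph_dist (star_graph p0 P) p q \<le> dist p p0 + dist p0 q"
  using star_graph_walk[OF assms] graph_dist_le_walk_length by (metis order_trans)

lemma graph_dist_star_graph_le_four_radius:
  assumes "p0 \<in> P" "p \<in> P" "q \<in> P" "\<And>x. x \<in> P \<Longrightarrow> dist x c = r"
  shows "graph_dist (star_graph p0 P) p q \<le> 4 * r"
proof -
  have "graph_dist (star_graph p0 P) p q \<le> dist p c + dist p0 c + (dist p0 c + dist q c)"
    using graph_dist_star_graph_le[OF assms(1-3)] dist_triangle2[of p p0 c] dist_triangle2[of p0 q c]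
    by linarith
  then show ?thesis
    using assms by simp
qed

lemma dilation_le:
  assumes "finite P" "p \<in> P" "q \<in> P" "p \<noteq> q"
    and "\<And>p q. p \<in> P \<Longrightarrow> q \<in> P \<Longrightarrow> p \<noteq> q \<Longrightarrow> graph_dist E p q \<le> K * dist p q"
  shows "dilation P E \<le> K"
proof -
  let ?S = "{graph_dist E p q / dist p q | p q. p \<in> P \<and> q \<in> P \<and> p \<noteq> q}"
  have "?S \<subseteq> (\<lambda>(p, q). graph_dist E p q / dist p q) ` (P \<times> P)"
    by auto
  then have "finite ?S"
    using \<open>finite P\<close> by (meson finite_SigmaI finite_imageI finite_subset)
  moreover have "?S \<noteq> {}"
    using assms(2-4) by blast
  moreover have "t \<le> K" if "t \<in> ?S" for t
    using that assms(5) by (auto simp: divide_le_eq)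
  ultimately show ?thesis
    unfolding dilation_def by simp
qed

theorem lemma25:
  fixes n :: nat and c :: complex and r :: real and \<theta> :: real and P :: "complex set"
  assumes "n \<ge> 2" and "r > 0" and "P = equally_spaced n c r \<theta>"
  shows "\<exists>E. spanning_tree P E \<and> dilation P E \<le> 2 * real n / pi + pi / (2 * real n)"
proof -
  obtain p0 q0 where "p0 \<in> P" "q0 \<in> P" "p0 \<noteq> q0"
    using equally_spaced_two_points assms by metis
  let ?s = "sin (pi / n)"
  have "?s > 0"
    using assms by (intro sin_gt_zero) (auto simp: field_simps)
  have "graph_dist (star_graph p0 P) p q \<le> 2 / ?s * dist p q"
    if "p \<in> P" "q \<in> P" "p \<noteq> q" for p q
  proof -
    have "graph_dist (star_graph p0 P) p q \<le> 4 * r"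
      using that \<open>p0 \<in> P\<close> assms
      by (intro graph_dist_star_graph_le_four_radius[where c = c]) (auto simp: dist_equally_spaced_center)
    also have "\<dots> = 2 / ?s * (2 * r * ?s)"
      using \<open>?s > 0\<close> by simp
    also have "\<dots> \<le> 2 / ?s * dist p q"
      using that assms \<open>?s > 0\<close> by (intro mult_left_mono equally_spaced_dist_ge) auto
    finally show ?thesis .
  qed
  then have "dilation P (star_graph p0 P) \<le> 2 / ?s"
    using \<open>p0 \<in> P\<close> \<open>q0 \<in> P\<close> \<open>p0 \<noteq> q0\<close> assms by (intro dilation_le) (auto simp: finite_equally_spaced)
  also have "2 / ?s \<le> 2 * real n / pi + pi / (2 * real n)"
    using two_div_sin_double_le[of "pi / (2 * n)"] assms by (simp add: field_simps)
  finally show ?thesis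
    using spanning_tree_star_graph[OF \<open>p0 \<in> P\<close>] by blast
qed

end
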